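(* Let $K\ge 1$ and let $\lambda_i>0$, $c_i>0$ for $i=1,\dots,K$. Let $\eta_1,\dots,\eta_K$ be independent random variables with $\eta_i\sim\mathrm{GG}(\lambda_i,c_i,1)$. Then: (i) if $\Psi=\prod_{i=1}^K \eta_i$, the sparsity shape parameter of $\Psi$ equals $\min\{\lambda_1,\dots,\lambda_K\}$; (ii) if $\Psi=\sum_{i=1}^K \eta_i$, the sparsity shape parameter of $\Psi$ equals $\sum_{i=1}^K \lambda_i$.
   Context: The gamma-gamma distribution $\mathrm{GG}(\lambda,c,d)$ with $\lambda,c,d>0$ is the distribution on $(0,\infty)$ with density $$g(\Psi)=\left(\frac{1}{d}\right)^{\lambda}\frac{\Gamma(\lambda+c)}{\Gamma(\lambda)\Gamma(c)}\Psi^{\lambda-1}\left(1+\frac{\Psi}{d}\right)^{-(\lambda+c)}.$$ For a positive random variable $\Psi$ with density $p$ on $(0,\infty)$, its sparsity shape parameter is defined as $$\sup\left\{ z \;\middle|\; \frac{p(\Psi)}{\Psi^{z-1}}\to \kappa \text{ as } \Psi\to 0 \text{ for some finite } \kappa\right\}.$$ *)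

theory Defs
  imports "HOL-Probability.Probability"
begin

definition gg_density :: "real \<Rightarrow> real \<Rightarrow> real \<Rightarrow> real \<Rightarrow> real" where
  "gg_density lam c d x =
     (if 0 < x then (1 / d) powr lam * (Gamma (lam + c) / (Gamma lam * Gamma c))
        * x powr (lam - 1) * (1 + x / d) powr (- (lam + c))
      else 0)"

definition sparsity_shape :: "(real \<Rightarrow> real) \<Rightarrow> real" where
  "sparsity_shape p =
     Sup {z. \<exists>\<kappa>::real. ((\<lambda>x. p x / x powr (z - 1)) \<longlongrightarrow> \<kappa>) (at_right 0)}"

text \<open>p is a (nonnegative) density of X w.r.t. Lebesgue measure which is continuous on (0, infinity).
  Such a version is unique on (0, infinity), which makes the sparsity shape parameter well defined.\<close>
definition cont_density :: "'a measure \<Rightarrow> ('a \<Rightarrow> real) \<Rightarrow> (real \<Rightarrow> real) \<Rightarrow> bool" where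
  "cont_density M X p \<longleftrightarrow>
     distributed M lborel X (\<lambda>x. ennreal (p x)) \<and> (\<forall>x. 0 \<le> p x) \<and> continuous_on {0<..} p"

end

theory Submission
  imports Defs "HOL-Real_Asymp.Real_Asymp"
begin

text \<open>A density that near \<open>0\<close> is bounded below by a multiple of \<open>x powr (m - 1)\<close> and above by
  multiples of \<open>x powr (w - 1)\<close> for every \<open>w < m\<close> has sparsity shape \<open>m\<close>; a continuous density
  is determined on \<open>(0, \<infinity>)\<close>, so this does not depend on the chosen version. The density of
  \<open>GG(\<lambda>, c, 1)\<close> is of this kind with \<open>m = \<lambda>\<close>, and the class is closed under the two operations:
  the density of a sum of independent positive variables is the convolution
  \<open>x \<integral>\<^sub>0\<^sup>1 f(x(1-s)) g(xs) ds\<close>, which the Beta integral shows to be of order \<open>x powr (a + b - 1)\<close>;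
  the density of a product is the Mellin convolution \<open>\<integral> f(t) g(z/t) / t dt\<close>, whose upper bound
  comes from the integrability of \<open>f t * t powr (- w)\<close> for \<open>w < a\<close>, and whose lower bounds
  \<open>z powr (a - 1)\<close> and \<open>z powr (b - 1)\<close> come from the windows \<open>t \<approx> z\<close> and \<open>t \<approx> 1\<close>.\<close>

section \<open>Sparsity shape from power bounds at zero\<close>

lemma div_powr_tendsto_0:
  fixes p :: "real \<Rightarrow> real"
  assumes "z < w"
    and nonneg: "\<forall>\<^sub>F x in at_right 0. 0 \<le> p x"
    and upper: "\<forall>\<^sub>F x in at_right 0. p x \<le> C * x powr (w - 1)"
  shows "((\<lambda>x. p x / x powr (z - 1)) \<longlongrightarrow> 0) (at_right 0)"
proof (rule tendsto_sandwich)
  show "\<forall>\<^sub>F x in at_right 0. 0 \<le> p x / x powr (z - 1)"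
    using nonneg by eventually_elim auto
  show "\<forall>\<^sub>F x in at_right 0. p x / x powr (z - 1) \<le> C * x powr (w - z)"
    using upper eventually_at_right_less
  proof eventually_elim
    case (elim x)
    then have "p x / x powr (z - 1) \<le> C * x powr (w - 1) / x powr (z - 1)"
      by (intro divide_right_mono) auto
    also have "\<dots> = C * x powr (w - z)"
      using powr_diff[of x "w - 1" "z - 1"] by simp
    finally show ?case .
  qed
  have "((\<lambda>x. x powr (w - z)) \<longlongrightarrow> 0) (at_right 0)" using \<open>z < w\<close> by real_asymp
  then show "((\<lambda>x. C * x powr (w - z)) \<longlongrightarrow> 0) (at_right 0)"
    by (rule tendsto_mult_right_zero)
qed simp

lemma div_powr_not_tendsto:
  fixes p :: "real \<Rightarrow> real"
  assumes "m < z" "0 < c"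
    and lower: "\<forall>\<^sub>F x in at_right 0. c * x powr (m - 1) \<le> p x"
  shows "\<not> ((\<lambda>x. p x / x powr (z - 1)) \<longlongrightarrow> \<kappa>) (at_right 0)"
proof
  assume "((\<lambda>x. p x / x powr (z - 1)) \<longlongrightarrow> \<kappa>) (at_right 0)"
  then have bounded: "\<forall>\<^sub>F x in at_right 0. p x / x powr (z - 1) < \<kappa> + 1"
    by (rule order_tendstoD) simp
  have "filterlim (\<lambda>x. x powr (m - z)) at_top (at_right 0)" using \<open>m < z\<close> by real_asymp
  then have "filterlim (\<lambda>x. c * x powr (m - z)) at_top (at_right 0)"
    using \<open>0 < c\<close> by (intro filterlim_tendsto_pos_mult_at_top[OF tendsto_const]) auto
  then have large: "\<forall>\<^sub>F x in at_right 0. \<kappa> + 1 < c * x powr (m - z)"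
    by (simp add: filterlim_at_top_dense)
  have "\<forall>\<^sub>F x in at_right (0::real). False"
    using bounded large lower eventually_at_right_less
  proof eventually_elim
    case (elim x)
    have "c * x powr (m - z) = c * x powr (m - 1) / x powr (z - 1)"
      using powr_diff[of x "m - 1" "z - 1"] by simp
    also have "\<dots> \<le> p x / x powr (z - 1)"
      using elim by (intro divide_right_mono) auto
    finally show ?case using elim by linarith
  qed
  then show False by simp
qed

lemma sparsity_shape_eqI:
  fixes p :: "real \<Rightarrow> real"
  assumes m: "0 < m"
    and nonneg: "\<forall>\<^sub>F x in at_right 0. 0 \<le> p x"
    and upper: "\<And>w. 0 < w \<Longrightarrow> w < m \<Longrightarrow> \<exists>C. \<forall>\<^sub>F x in at_right 0. p x \<le> C * x powr (w - 1)"
    and lower: "\<exists>c>0. \<forall>\<^sub>F x in at_right 0. c * x powr (m - 1) \<le> p x"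
  shows "sparsity_shape p = m"
proof -
  define S where "S = {z. \<exists>\<kappa>::real. ((\<lambda>x. p x / x powr (z - 1)) \<longlongrightarrow> \<kappa>) (at_right 0)}"
  have below: "z \<in> S" if "z < m" for z
  proof -
    define w where "w = (max z 0 + m) / 2"
    have w: "0 < w" "w < m" "z < w" using that m by (auto simp: w_def)
    then obtain C where "\<forall>\<^sub>F x in at_right 0. p x \<le> C * x powr (w - 1)"
      using upper by blast
    then show ?thesis unfolding S_def using div_powr_tendsto_0[OF w(3) nonneg] by blast
  qed
  have above: "z \<notin> S" if "m < z" for z
    using lower div_powr_not_tendsto[OF that] unfolding S_def by blast
  have "Sup S = m"
  proof (rule cSup_eq_non_empty)
    show "S \<noteq> {}" using below[of 0] m by blast
    show "x \<le> m" if "x \<in> S" for x using above[of x] that by force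
    show "m \<le> y" if "\<And>x. x \<in> S \<Longrightarrow> x \<le> y" for y
    proof (rule ccontr)
      assume "\<not> m \<le> y"
      then have "(y + m) / 2 \<in> S" by (intro below) auto
      with that \<open>\<not> m \<le> y\<close> show False by fastforce
    qed
  qed
  then show ?thesis unfolding sparsity_shape_def S_def .
qed

section \<open>Densities of power order at zero\<close>

definition half_line_density :: "(real \<Rightarrow> real) \<Rightarrow> bool" where
  "half_line_density f \<longleftrightarrow> (\<forall>x. 0 \<le> f x) \<and> (\<forall>x\<le>0. f x = 0) \<and> continuous_on {0<..} f"

definition power_upper_bound :: "(real \<Rightarrow> real) \<Rightarrow> real \<Rightarrow> bool" where
  "power_upper_bound f m \<longleftrightarrow> (\<exists>C. \<forall>x>0. f x \<le> C * x powr (m - 1))"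

definition power_lower_bound_at_0 :: "(real \<Rightarrow> real) \<Rightarrow> real \<Rightarrow> bool" where
  "power_lower_bound_at_0 f m \<longleftrightarrow> (\<exists>c>0. \<forall>\<^sub>F x in at_right 0. c * x powr (m - 1) \<le> f x)"

text \<open>The upper bounds are only required for exponents below \<open>m\<close>: Mellin convolution does not
  preserve the exact exponent.\<close>
definition shape_density :: "(real \<Rightarrow> real) \<Rightarrow> real \<Rightarrow> bool" where
  "shape_density f m \<longleftrightarrow> 0 < m \<and> half_line_density f
     \<and> (\<forall>w\<in>{0<..<m}. power_upper_bound f w) \<and> power_lower_bound_at_0 f m"

lemma power_upper_boundE:
  assumes "power_upper_bound f m" and "\<And>x. 0 \<le> f x"
  obtains C where "0 \<le> C" "\<And>x. 0 < x \<Longrightarrow> f x \<le> C * x powr (m - 1)"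
proof -
  obtain C where C: "\<And>x. 0 < x \<Longrightarrow> f x \<le> C * x powr (m - 1)"
    using assms(1) by (auto simp: power_upper_bound_def)
  have "f x \<le> max C 0 * x powr (m - 1)" if "0 < x" for x
  proof -
    have "C * x powr (m - 1) \<le> max C 0 * x powr (m - 1)"
      by (rule mult_right_mono) auto
    then show ?thesis using C[OF that] by linarith
  qed
  then show thesis by (rule that[of "max C 0", rotated]) auto
qed

lemma power_lower_bound_at_0E:
  assumes "power_lower_bound_at_0 f m"
  obtains c \<delta> where "0 < c" "0 < \<delta>" "\<And>x. 0 < x \<Longrightarrow> x < \<delta> \<Longrightarrow> c * x powr (m - 1) \<le> f x"
  using assms unfolding power_lower_bound_at_0_def eventually_at_right_field by auto

lemma power_lower_bound_at_0I:
  assumes "0 < c" "0 < \<delta>" "\<And>x. 0 < x \<Longrightarrow> x < \<delta> \<Longrightarrow> c * x powr (m - 1) \<le> f x"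
  shows "power_lower_bound_at_0 f m"
  using assms unfolding power_lower_bound_at_0_def eventually_at_right_field by auto

lemma half_line_density_nonneg: "half_line_density f \<Longrightarrow> 0 \<le> f x"
  by (simp add: half_line_density_def)

lemma half_line_density_nonpos: "half_line_density f \<Longrightarrow> x \<le> 0 \<Longrightarrow> f x = 0"
  by (simp add: half_line_density_def)

lemma half_line_density_isCont:
  assumes "half_line_density f" "y \<noteq> 0"
  shows "isCont f y"
proof (cases "y > 0")
  case True
  then show ?thesis
    using assms(1) continuous_on_eq_continuous_at[OF open_greaterThan]
    by (auto simp: half_line_density_def)
next
  case False
  have "continuous_on {..<0} (\<lambda>_. 0::real)" by simp
  then have "continuous_on {..<0} f"
    by (rule continuous_on_cong[THEN iffD1, rotated 2]) (use assms(1) in \<open>auto simp: half_line_density_def\<close>)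
  then show ?thesis
    using False assms(2) continuous_on_eq_continuous_at[OF open_lessThan] by force
qed

lemma half_line_density_borel_measurable:
  assumes "half_line_density f"
  shows "f \<in> borel_measurable borel"
proof -
  have "(\<lambda>x. indicator {0<..} x *\<^sub>R f x) \<in> borel_measurable borel"
    using assms by (intro borel_measurable_continuous_on_indicator) (auto simp: half_line_density_def)
  moreover have "(\<lambda>x. indicator {0<..} x *\<^sub>R f x) = f"
    using assms by (auto simp: half_line_density_def indicator_def fun_eq_iff)
  ultimately show ?thesis by simp
qed

lemma min_powr_le_powr_between:
  fixes p q y e :: real
  assumes "0 < p" "p \<le> y" "y \<le> q"
  shows "min (p powr e) (q powr e) \<le> y powr e"
proof (cases "e \<ge> 0")
  case True
  then have "p powr e \<le> y powr e" using assms by (intro powr_mono2) auto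
  then show ?thesis by simp
next
  case False
  then have "q powr e \<le> y powr e" using assms by (intro powr_mono2') auto
  then show ?thesis by simp
qed

lemma powr_between_le_max_powr:
  fixes p q y e :: real
  assumes "0 < p" "p \<le> y" "y \<le> q"
  shows "y powr e \<le> max (p powr e) (q powr e)"
proof (cases "e \<ge> 0")
  case True
  then have "y powr e \<le> q powr e" using assms by (intro powr_mono2) auto
  then show ?thesis by simp
next
  case False
  then have "y powr e \<le> p powr e" using assms by (intro powr_mono2') auto
  then show ?thesis by simp
qed

lemma powr_mult_min_le_powr_between:
  fixes z p q y e :: real
  assumes "0 < z" "0 < p" "p * z \<le> y" "y \<le> q * z"
  shows "z powr e * min (p powr e) (q powr e) \<le> y powr e"
proof -
  have "0 < q * z" using assms mult_pos_pos[of p z] by linarith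
  then have "0 < q" using assms(1) by (simp add: zero_less_mult_iff)
  have "min ((p * z) powr e) ((q * z) powr e) \<le> y powr e"
    using assms by (intro min_powr_le_powr_between) auto
  moreover have "min ((p * z) powr e) ((q * z) powr e) = z powr e * min (p powr e) (q powr e)"
    using assms \<open>0 < q\<close> by (simp add: powr_mult min_mult_distrib_left mult.commute)
  ultimately show ?thesis by simp
qed

definition beta_kernel :: "real \<Rightarrow> real \<Rightarrow> real \<Rightarrow> real" where
  "beta_kernel a b s = indicator {0..1} s * (s powr (a - 1) * (1 - s) powr (b - 1))"

lemma beta_kernel_nonneg: "0 \<le> beta_kernel a b s"
  by (simp add: beta_kernel_def)

lemma integrable_beta_kernel:
  assumes "0 < a" "0 < b"
  shows "integrable lborel (beta_kernel a b)"
  using integrable_Beta[OF assms] unfolding set_integrable_def beta_kernel_def by simp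

lemma isCont_integral_dominated:
  fixes F :: "real \<Rightarrow> real \<Rightarrow> real" and w :: "real \<Rightarrow> real"
  assumes U: "open U" "x0 \<in> U"
    and meas: "\<And>x. F x \<in> borel_measurable lborel"
    and cont: "\<And>t. isCont (\<lambda>x. F x t) x0"
    and w: "integrable lborel w"
    and bound: "\<And>x t. x \<in> U \<Longrightarrow> \<bar>F x t\<bar> \<le> w t"
  shows "isCont (\<lambda>x. \<integral>t. F x t \<partial>lborel) x0"
proof (rule continuous_at_sequentiallyI)
  fix u :: "nat \<Rightarrow> real" assume u: "u \<longlonglongrightarrow> x0"
  obtain N where N: "\<And>n. n \<ge> N \<Longrightarrow> u n \<in> U"
    using topological_tendstoD[OF u U] by (auto simp: eventually_sequentially)
  have "(\<lambda>n. \<integral>t. F (u (n + N)) t \<partial>lborel) \<longlonglongrightarrow> \<integral>t. F x0 t \<partial>lborel"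
  proof (rule integral_dominated_convergence[where w=w])
    show "AE t in lborel. (\<lambda>n. F (u (n + N)) t) \<longlonglongrightarrow> F x0 t"
    proof (intro AE_I2)
      fix t
      have "(\<lambda>n. u (n + N)) \<longlonglongrightarrow> x0" using u by (rule LIMSEQ_ignore_initial_segment)
      then show "(\<lambda>n. F (u (n + N)) t) \<longlonglongrightarrow> F x0 t"
        using cont[of t] by (rule isCont_tendsto_compose[rotated])
    qed
    show "AE t in lborel. norm (F (u (n + N)) t) \<le> w t" for n
      using bound[OF N[of "n + N"]] by auto
  qed (use meas w in auto)
  then show "(\<lambda>n. \<integral>t. F (u n) t \<partial>lborel) \<longlonglongrightarrow> \<integral>t. F x0 t \<partial>lborel"
    by (rule LIMSEQ_offset)
qed

lemma continuous_density_unique: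
  fixes p q :: "real \<Rightarrow> real"
  assumes M: "prob_space M"
    and p: "distributed M lborel X (\<lambda>x. ennreal (p x))" "continuous_on {0<..} p"
    and q: "distributed M lborel X (\<lambda>x. ennreal (q x))" "continuous_on {0<..} q"
    and nonneg: "\<And>x. 0 \<le> p x" "\<And>x. 0 \<le> q x"
    and x0: "x0 > 0"
  shows "p x0 = q x0"
proof (rule ccontr)
  assume ne: "p x0 \<noteq> q x0"
  have AE: "AE x in lborel. p x = q x"
    using prob_space.distributed_unique[OF M p(1) q(1)] nonneg by (auto elim!: AE_mp)
  define d where "d = (\<lambda>x. p x - q x)"
  have "continuous_on {0<..} d" unfolding d_def using p(2) q(2) by (intro continuous_intros)
  then have "open (d -` (-{0}) \<inter> {0<..})"
    using continuous_on_open_vimage[OF open_greaterThan, of 0 d] by auto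
  moreover have "x0 \<in> d -` (-{0}) \<inter> {0<..}" using ne x0 by (auto simp: d_def)
  ultimately obtain e where e: "e > 0" "ball x0 e \<subseteq> d -` (-{0}) \<inter> {0<..}"
    by (meson open_contains_ball)
  have "AE x in lborel. x \<notin> {x0 - e<..<x0 + e}"
    using AE
  proof eventually_elim
    case (elim x)
    then show ?case using e(2) by (auto simp: ball_eq_greaterThanLessThan d_def)
  qed
  then have "{x0 - e<..<x0 + e} \<in> null_sets lborel"
    by (subst AE_iff_null_sets) auto
  then show False using e(1) by (simp add: null_sets_def)
qed

lemma (in prob_space) sparsity_shape_of_shape_density:
  assumes X: "distributed M lborel X (\<lambda>x. ennreal (h x))" and h: "shape_density h m"
    and p: "cont_density M X p"
  shows "sparsity_shape p = m"
proof -
  have hd: "0 < m" "half_line_density h" "\<And>w. 0 < w \<Longrightarrow> w < m \<Longrightarrow> power_upper_bound h w"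
    "power_lower_bound_at_0 h m"
    using h by (auto simp: shape_density_def)
  have pd: "distributed M lborel X (\<lambda>x. ennreal (p x))" "\<And>x. 0 \<le> p x" "continuous_on {0<..} p"
    using p by (auto simp: cont_density_def)
  have eq: "\<forall>\<^sub>F x in at_right 0. p x = h x"
    using eventually_at_right_less
  proof eventually_elim
    case (elim x)
    show ?case
      using continuous_density_unique[OF prob_space_axioms pd(1,3) X _ pd(2) _ elim] hd(2)
      by (auto simp: half_line_density_def)
  qed
  show ?thesis
  proof (rule sparsity_shape_eqI[OF hd(1)])
    show "\<forall>\<^sub>F x in at_right 0. 0 \<le> p x" using pd(2) by simp
    show "\<exists>C. \<forall>\<^sub>F x in at_right 0. p x \<le> C * x powr (w - 1)" if w: "0 < w" "w < m" for w
    proof -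
      obtain C where C: "\<And>x. 0 < x \<Longrightarrow> h x \<le> C * x powr (w - 1)"
        using hd(3)[OF w] unfolding power_upper_bound_def by blast
      have "\<forall>\<^sub>F x in at_right 0. p x \<le> C * x powr (w - 1)"
        using eq eventually_at_right_less by eventually_elim (use C in auto)
      then show ?thesis ..
    qed
    obtain c where "c > 0" "\<forall>\<^sub>F x in at_right 0. c * x powr (m - 1) \<le> h x"
      using hd(4) by (auto simp: power_lower_bound_at_0_def)
    moreover from this(2) have "\<forall>\<^sub>F x in at_right 0. c * x powr (m - 1) \<le> p x"
      using eq by eventually_elim simp
    ultimately show "\<exists>c>0. \<forall>\<^sub>F x in at_right 0. c * x powr (m - 1) \<le> p x" by blast
  qed
qed

section \<open>The gamma-gamma density\<close>

lemma gg_density_1_eq: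
  assumes "0 < x"
  shows "gg_density l c 1 x
    = Gamma (l + c) / (Gamma l * Gamma c) * (x powr (l - 1) * (1 + x) powr (- (l + c)))"
  using assms by (simp add: gg_density_def)

lemma gg_density_le_powr:
  assumes l: "0 < l" and c: "0 < c" and w: "0 < w" "w \<le> l" and x: "0 < x"
  shows "gg_density l c 1 x \<le> Gamma (l + c) / (Gamma l * Gamma c) * x powr (w - 1)"
proof -
  have "x powr (l - 1) * (1 + x) powr (- (l + c)) \<le> x powr (w - 1)"
  proof (cases "x \<le> 1")
    case True
    have "x powr (l - 1) * (1 + x) powr (- (l + c)) \<le> x powr (l - 1) * 1"
      using x l c powr_mono2'[of "-(l+c)" 1 "1+x"] by (intro mult_left_mono) auto
    also have "\<dots> \<le> x powr (w - 1)" using True x w by (simp add: powr_mono')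
    finally show ?thesis .
  next
    case False
    have "(1 + x) powr (- (l + c)) \<le> x powr (- (l + c))"
      using x l c by (intro powr_mono2') auto
    then have "x powr (l - 1) * (1 + x) powr (- (l + c)) \<le> x powr (l - 1) * x powr (- (l + c))"
      by (intro mult_left_mono) auto
    also have "\<dots> = x powr (- 1 - c)" using x by (simp add: powr_add[symmetric])
    also have "\<dots> \<le> x powr (w - 1)" using False w c by (intro powr_mono) auto
    finally show ?thesis .
  qed
  moreover have "0 \<le> Gamma (l + c) / (Gamma l * Gamma c)" using l c by simp
  ultimately show ?thesis unfolding gg_density_1_eq[OF x] by (rule mult_left_mono)
qed

lemma powr_le_gg_density:
  assumes l: "0 < l" and c: "0 < c" and x: "0 < x" "x \<le> 1"
  shows "Gamma (l + c) / (Gamma l * Gamma c) * 2 powr (- (l + c)) * x powr (l - 1)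
    \<le> gg_density l c 1 x"
proof -
  have "x powr (l - 1) * 2 powr (- (l + c)) \<le> x powr (l - 1) * (1 + x) powr (- (l + c))"
    using x l c by (intro mult_left_mono powr_mono2') auto
  moreover have "0 \<le> Gamma (l + c) / (Gamma l * Gamma c)" using l c by simp
  ultimately have "Gamma (l + c) / (Gamma l * Gamma c) * (x powr (l - 1) * 2 powr (- (l + c)))
    \<le> gg_density l c 1 x"
    unfolding gg_density_1_eq[OF x(1)] by (rule mult_left_mono)
  then show ?thesis by (simp only: ac_simps)
qed

lemma shape_density_gg_density:
  assumes l: "0 < l" and c: "0 < c"
  shows "shape_density (gg_density l c 1) l"
  unfolding shape_density_def
proof (intro conjI ballI)
  define A where "A = Gamma (l + c) / (Gamma l * Gamma c)"
  have A: "A > 0" using l c by (simp add: A_def)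
  have "continuous_on {0<..} (\<lambda>x::real. A * x powr (l - 1) * (1 + x) powr (- (l + c)))"
    by (intro continuous_intros) auto
  then have "continuous_on {0<..} (gg_density l c 1)"
    by (rule continuous_on_cong[THEN iffD1, rotated 2]) (auto simp: gg_density_def A_def)
  then show "half_line_density (gg_density l c 1)"
    using l c by (auto simp: half_line_density_def gg_density_def)
  show "power_upper_bound (gg_density l c 1) w" if "w \<in> {0<..<l}" for w
    using gg_density_le_powr[OF l c, of w] that unfolding power_upper_bound_def
    by (intro exI[of _ "Gamma (l + c) / (Gamma l * Gamma c)"]) auto
  show "power_lower_bound_at_0 (gg_density l c 1) l"
  proof (rule power_lower_bound_at_0I[of "A * 2 powr (- (l + c))" 1])
    show "A * 2 powr (- (l + c)) * x powr (l - 1) \<le> gg_density l c 1 x" if "0 < x" "x < 1" for x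
      using powr_le_gg_density[OF l c, of x] that by (simp add: A_def)
  qed (use A in simp_all)
qed (use l in auto)


section \<open>Sums: convolution\<close>

text \<open>The convolution of two densities vanishing on \<open>(-\<infinity>, 0]\<close>, after the substitution
  \<open>y = x * s\<close>, which confines the integrand to \<open>s \<in> [0, 1]\<close>.\<close>
definition pos_convolution :: "(real \<Rightarrow> real) \<Rightarrow> (real \<Rightarrow> real) \<Rightarrow> real \<Rightarrow> real" where
  "pos_convolution f g x = (if 0 < x then x * (\<integral>s. f (x - x * s) * g (x * s) \<partial>lborel) else 0)"

context
  fixes f g :: "real \<Rightarrow> real" and a b :: real
  assumes f: "half_line_density f" and g: "half_line_density g"
    and a: "0 < a" and b: "0 < b"
    and f_upper: "power_upper_bound f a" and g_upper: "power_upper_bound g b"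
begin

lemma convolution_kernel_le:
  obtains C where "0 \<le> C"
    "\<And>x s. 0 < x \<Longrightarrow> f (x - x * s) * g (x * s) \<le> C * x powr (a + b - 2) * beta_kernel b a s"
proof -
  obtain Cf where Cf: "0 \<le> Cf" "\<And>x. 0 < x \<Longrightarrow> f x \<le> Cf * x powr (a - 1)"
    using f_upper half_line_density_nonneg[OF f] by (rule power_upper_boundE) blast
  obtain Cg where Cg: "0 \<le> Cg" "\<And>x. 0 < x \<Longrightarrow> g x \<le> Cg * x powr (b - 1)"
    using g_upper half_line_density_nonneg[OF g] by (rule power_upper_boundE) blast
  have "f (x - x * s) * g (x * s) \<le> Cf * Cg * x powr (a + b - 2) * beta_kernel b a s"
    if x: "0 < x" for x s
  proof (cases "0 < s \<and> s < 1")
    case True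
    have "x - x * s = x * (1 - s)" by (simp add: algebra_simps)
    then have F: "f (x - x * s) \<le> Cf * (x powr (a - 1) * (1 - s) powr (a - 1))"
      using Cf(2)[of "x * (1 - s)"] True x by (simp add: powr_mult)
    have G: "g (x * s) \<le> Cg * (x powr (b - 1) * s powr (b - 1))"
      using Cg(2)[of "x * s"] True x by (simp add: powr_mult)
    have "f (x - x * s) * g (x * s)
        \<le> (Cf * (x powr (a - 1) * (1 - s) powr (a - 1))) * (Cg * (x powr (b - 1) * s powr (b - 1)))"
      using F G Cf(1) half_line_density_nonneg[OF f] half_line_density_nonneg[OF g]
      by (intro mult_mono) auto
    also have "\<dots> = Cf * Cg * (x powr (a - 1) * x powr (b - 1)) * (s powr (b - 1) * (1 - s) powr (a - 1))"
      by (simp add: ac_simps)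
    also have "x powr (a - 1) * x powr (b - 1) = x powr (a + b - 2)"
      using x by (simp add: powr_add[symmetric])
    finally show ?thesis using True by (simp add: beta_kernel_def)
  next
    case False
    then have "x * s \<le> 0 \<or> x - x * s \<le> 0"
      using x by (auto simp: mult_nonneg_nonpos mult_le_cancel_left1 not_less)
    then have "f (x - x * s) * g (x * s) = 0"
      using half_line_density_nonpos[OF f] half_line_density_nonpos[OF g] by auto
    moreover have "0 \<le> Cf * Cg * x powr (a + b - 2) * beta_kernel b a s"
      using Cf(1) Cg(1) beta_kernel_nonneg[of b a s] by simp
    ultimately show ?thesis by (simp only:)
  qed
  with Cf(1) Cg(1) show thesis by (intro that[of "Cf * Cg"]) auto
qed

lemma integrable_convolution_kernel:
  assumes x: "0 < x"
  shows "integrable lborel (\<lambda>s. f (x - x * s) * g (x * s))"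
proof -
  obtain C where C: "0 \<le> C"
    "\<And>x s. 0 < x \<Longrightarrow> f (x - x * s) * g (x * s) \<le> C * x powr (a + b - 2) * beta_kernel b a s"
    by (rule convolution_kernel_le) blast
  have [measurable]: "f \<in> borel_measurable borel" "g \<in> borel_measurable borel"
    using f g by (simp_all add: half_line_density_borel_measurable)
  show ?thesis
  proof (rule Bochner_Integration.integrable_bound)
    show "integrable lborel (\<lambda>s. C * x powr (a + b - 2) * beta_kernel b a s)"
      using integrable_beta_kernel[OF b a] by simp
    show "AE s in lborel. norm (f (x - x * s) * g (x * s)) \<le> norm (C * x powr (a + b - 2) * beta_kernel b a s)"
      using C(2)[OF x] C(1) beta_kernel_nonneg half_line_density_nonneg[OF f] half_line_density_nonneg[OF g]
      by (intro AE_I2) (simp add: abs_mult)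
  qed simp
qed

lemma pos_convolution_nonneg: "0 \<le> pos_convolution f g x"
  using half_line_density_nonneg[OF f] half_line_density_nonneg[OF g]
  by (simp add: pos_convolution_def integral_nonneg)

lemma nn_integral_convolution_eq:
  "(\<integral>\<^sup>+y. ennreal (f (x - y)) * ennreal (g y) \<partial>lborel) = ennreal (pos_convolution f g x)"
proof (cases "0 < x")
  case True
  have [measurable]: "f \<in> borel_measurable borel" "g \<in> borel_measurable borel"
    using f g by (simp_all add: half_line_density_borel_measurable)
  have "(\<integral>\<^sup>+y. ennreal (f (x - y)) * ennreal (g y) \<partial>lborel)
      = ennreal \<bar>x\<bar> * (\<integral>\<^sup>+s. ennreal (f (x - (0 + x * s))) * ennreal (g (0 + x * s)) \<partial>lborel)"
    using True by (intro nn_integral_real_affine) auto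
  also have "\<dots> = ennreal x * (\<integral>\<^sup>+s. ennreal (f (x - x * s) * g (x * s)) \<partial>lborel)"
    using True half_line_density_nonneg[OF f] half_line_density_nonneg[OF g] by (simp add: ennreal_mult)
  also have "(\<integral>\<^sup>+s. ennreal (f (x - x * s) * g (x * s)) \<partial>lborel)
      = ennreal (\<integral>s. f (x - x * s) * g (x * s) \<partial>lborel)"
    using half_line_density_nonneg[OF f] half_line_density_nonneg[OF g]
    by (intro nn_integral_eq_integral integrable_convolution_kernel[OF True] AE_I2) simp
  also have "ennreal x * \<dots> = ennreal (pos_convolution f g x)"
    using True half_line_density_nonneg[OF f] half_line_density_nonneg[OF g]
    by (simp add: pos_convolution_def ennreal_mult integral_nonneg)
  finally show ?thesis .
next
  case False
  then have "ennreal (f (x - y)) * ennreal (g y) = 0" for y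
    using half_line_density_nonpos[OF f] half_line_density_nonpos[OF g] by (cases "y > 0") auto
  then have "(\<integral>\<^sup>+y. ennreal (f (x - y)) * ennreal (g y) \<partial>lborel) = 0"
    by (simp only:) simp
  then show ?thesis using False by (simp add: pos_convolution_def)
qed

lemma continuous_on_pos_convolution: "continuous_on {0<..} (pos_convolution f g)"
proof -
  obtain C where C: "0 \<le> C"
    "\<And>x s. 0 < x \<Longrightarrow> f (x - x * s) * g (x * s) \<le> C * x powr (a + b - 2) * beta_kernel b a s"
    by (rule convolution_kernel_le) blast
  have [measurable]: "f \<in> borel_measurable borel" "g \<in> borel_measurable borel"
    using f g by (simp_all add: half_line_density_borel_measurable)
  have "isCont (pos_convolution f g) x0" if x0: "0 < x0" for x0
  proof -
    define M where "M = max ((x0 / 2) powr (a + b - 2)) ((2 * x0) powr (a + b - 2))"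
    have "isCont (\<lambda>x. \<integral>s. f (x - x * s) * g (x * s) \<partial>lborel) x0"
    proof (rule isCont_integral_dominated[where U="{x0 / 2<..<2 * x0}" and w="\<lambda>s. C * M * beta_kernel b a s"])
      show "integrable lborel (\<lambda>s. C * M * beta_kernel b a s)"
        using integrable_beta_kernel[OF b a] by simp
      show "\<bar>f (x - x * s) * g (x * s)\<bar> \<le> C * M * beta_kernel b a s" if "x \<in> {x0 / 2<..<2 * x0}" for x s
      proof -
        have x: "0 < x" "x0 / 2 \<le> x" "x \<le> 2 * x0" using that x0 by auto
        have "x powr (a + b - 2) \<le> M" unfolding M_def using x x0 by (intro powr_between_le_max_powr) auto
        then have "C * x powr (a + b - 2) * beta_kernel b a s \<le> C * M * beta_kernel b a s"
          using C(1) beta_kernel_nonneg by (intro mult_right_mono mult_left_mono) auto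
        then show ?thesis
          using C(2)[OF x(1), of s] half_line_density_nonneg[OF f] half_line_density_nonneg[OF g] by simp
      qed
      show "isCont (\<lambda>x. f (x - x * s) * g (x * s)) x0" for s
      proof (cases "s = 0 \<or> s = 1")
        case True
        then have "(\<lambda>x. f (x - x * s) * g (x * s)) = (\<lambda>x. 0)"
          using half_line_density_nonpos[OF f] half_line_density_nonpos[OF g] by auto
        then show ?thesis by simp
      next
        case False
        then have "x0 - x0 * s \<noteq> 0" "x0 * s \<noteq> 0"
          using x0 by (auto simp: right_diff_distrib[symmetric])
        then have "isCont f (x0 - x0 * s)" "isCont g (x0 * s)"
          using f g by (simp_all add: half_line_density_isCont)
        then show ?thesis by (intro continuous_intros isCont_o2[where f="\<lambda>x. x - x * s"] isCont_o2[where f="\<lambda>x. x * s"]) auto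
      qed
    qed (use x0 in auto)
    then have "isCont (\<lambda>x. x * (\<integral>s. f (x - x * s) * g (x * s) \<partial>lborel)) x0"
      by (intro isCont_mult) auto
    moreover have "\<forall>\<^sub>F x in nhds x0. pos_convolution f g x = x * (\<integral>s. f (x - x * s) * g (x * s) \<partial>lborel)"
      using eventually_nhds_in_open[of "{0<..}" x0] x0 by (auto simp: pos_convolution_def elim!: eventually_mono)
    ultimately show ?thesis by (simp add: isCont_cong)
  qed
  then show ?thesis using continuous_on_eq_continuous_at[OF open_greaterThan] by blast
qed

lemma half_line_density_pos_convolution: "half_line_density (pos_convolution f g)"
  using pos_convolution_nonneg continuous_on_pos_convolution
  by (auto simp: half_line_density_def pos_convolution_def)

lemma power_upper_bound_pos_convolution: "power_upper_bound (pos_convolution f g) (a + b)"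
proof -
  obtain C where C: "0 \<le> C"
    "\<And>x s. 0 < x \<Longrightarrow> f (x - x * s) * g (x * s) \<le> C * x powr (a + b - 2) * beta_kernel b a s"
    by (rule convolution_kernel_le) blast
  define B where "B = (\<integral>s. beta_kernel b a s \<partial>lborel)"
  have "pos_convolution f g x \<le> C * B * x powr (a + b - 1)" if x: "0 < x" for x
  proof -
    have "(\<integral>s. f (x - x * s) * g (x * s) \<partial>lborel) \<le> (\<integral>s. C * x powr (a + b - 2) * beta_kernel b a s \<partial>lborel)"
      using integrable_convolution_kernel[OF x] integrable_beta_kernel[OF b a] C(2)[OF x]
      by (intro integral_mono) auto
    also have "\<dots> = C * B * x powr (a + b - 2)" by (simp add: B_def)
    finally have "x * (\<integral>s. f (x - x * s) * g (x * s) \<partial>lborel) \<le> x * (C * B * x powr (a + b - 2))"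
      using x by (intro mult_left_mono) auto
    also have "\<dots> = C * B * (x powr 1 * x powr (a + b - 2))" using x by simp
    also have "x powr 1 * x powr (a + b - 2) = x powr (a + b - 1)"
      using powr_add[of x 1 "a + b - 2"] by simp
    finally show ?thesis using x by (simp add: pos_convolution_def)
  qed
  then show ?thesis unfolding power_upper_bound_def by blast
qed

lemma power_lower_bound_pos_convolution:
  fixes p q :: real
  assumes "power_lower_bound_at_0 f p" "power_lower_bound_at_0 g q"
  shows "power_lower_bound_at_0 (pos_convolution f g) (p + q)"
proof -
  obtain cf \<delta>f where df: "0 < cf" "0 < \<delta>f" "\<And>x. 0 < x \<Longrightarrow> x < \<delta>f \<Longrightarrow> cf * x powr (p - 1) \<le> f x"
    using assms(1) by (rule power_lower_bound_at_0E) blast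
  obtain cg \<delta>g where dg: "0 < cg" "0 < \<delta>g" "\<And>x. 0 < x \<Longrightarrow> x < \<delta>g \<Longrightarrow> cg * x powr (q - 1) \<le> g x"
    using assms(2) by (rule power_lower_bound_at_0E) blast
  define \<kappa> where "\<kappa> = min ((1/3) powr (p - 1)) ((2/3) powr (p - 1)) * min ((1/3) powr (q - 1)) ((2/3) powr (q - 1))"
  have \<kappa>: "0 < \<kappa>" by (simp add: \<kappa>_def)
  have "cf * cg * \<kappa> / 3 * x powr (p + q - 1) \<le> pos_convolution f g x"
    if x: "0 < x" "x < min \<delta>f \<delta>g" for x
  proof -
    have window: "cf * cg * \<kappa> * x powr (p + q - 2) * indicator {1/3..2/3} s \<le> f (x - x * s) * g (x * s)" for s
    proof (cases "s \<in> {1/3..2/3}")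
      case True
      have eq: "x - x * s = x * (1 - s)" by (simp add: algebra_simps)
      have "x * (1 - s) \<le> x" using x True by (intro mult_left_le) auto
      then have "x * (1 - s) < \<delta>f" using x by linarith
      then have F: "cf * (x powr (p - 1) * (1 - s) powr (p - 1)) \<le> f (x - x * s)"
        using df(3)[of "x * (1 - s)"] x True unfolding eq by (simp add: powr_mult)
      have "x * s \<le> x" using x True by (intro mult_left_le) auto
      then have "x * s < \<delta>g" using x by linarith
      then have G: "cg * (x powr (q - 1) * s powr (q - 1)) \<le> g (x * s)"
        using dg(3)[of "x * s"] x True by (simp add: powr_mult)
      have "\<kappa> \<le> (1 - s) powr (p - 1) * s powr (q - 1)"
        unfolding \<kappa>_def using True by (intro mult_mono min_powr_le_powr_between) auto
      then have "cf * cg * \<kappa> * x powr (p + q - 2) \<le> cf * cg * ((1 - s) powr (p - 1) * s powr (q - 1)) * x powr (p + q - 2)"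
        using df(1) dg(1) by (intro mult_right_mono mult_left_mono) auto
      also have "\<dots> = (cf * (x powr (p - 1) * (1 - s) powr (p - 1))) * (cg * (x powr (q - 1) * s powr (q - 1)))"
        using x by (simp add: powr_add[symmetric] algebra_simps)
      also have "\<dots> \<le> f (x - x * s) * g (x * s)"
        using F G df(1) dg(1) half_line_density_nonneg[OF f] by (intro mult_mono) auto
      finally show ?thesis using True by simp
    qed (use half_line_density_nonneg[OF f] half_line_density_nonneg[OF g] in simp)
    have "cf * cg * \<kappa> * x powr (p + q - 2) / 3 \<le> (\<integral>s. f (x - x * s) * g (x * s) \<partial>lborel)"
      using integral_mono[OF _ integrable_convolution_kernel[OF x(1)] window] by simp
    then have "cf * cg * \<kappa> * x powr (p + q - 2) / 3 * x \<le> pos_convolution f g x"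
      using x by (simp add: pos_convolution_def mult.commute mult_left_mono)
    moreover have "x powr (p + q - 2) * x = x powr (p + q - 1)"
      using x powr_add[of x "p + q - 2" 1] by simp
    ultimately show ?thesis by (simp add: ac_simps)
  qed
  then show ?thesis
    using df dg \<kappa> by (intro power_lower_bound_at_0I[of "cf * cg * \<kappa> / 3" "min \<delta>f \<delta>g"]) auto
qed

end

lemma shape_density_pos_convolution:
  assumes f: "shape_density f a" and g: "shape_density g b"
  shows "shape_density (pos_convolution f g) (a + b)"
proof -
  have a: "0 < a" "half_line_density f" "\<And>w. 0 < w \<Longrightarrow> w < a \<Longrightarrow> power_upper_bound f w"
    "power_lower_bound_at_0 f a"
    using f by (auto simp: shape_density_def)
  have b: "0 < b" "half_line_density g" "\<And>w. 0 < w \<Longrightarrow> w < b \<Longrightarrow> power_upper_bound g w"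
    "power_lower_bound_at_0 g b"
    using g by (auto simp: shape_density_def)
  have "power_upper_bound (pos_convolution f g) w" if w: "0 < w" "w < a + b" for w
  proof -
    have "w * a / (a + b) < a" "w * b / (a + b) < b"
      using a(1) b(1) mult_strict_left_mono[OF w(2) a(1)] mult_strict_left_mono[OF w(2) b(1)]
      by (simp_all add: field_simps)
    then have "power_upper_bound (pos_convolution f g) (w * a / (a + b) + w * b / (a + b))"
      using a b w by (intro power_upper_bound_pos_convolution) auto
    moreover have "w * a / (a + b) + w * b / (a + b) = w"
      using a(1) b(1) by (simp add: add_divide_distrib[symmetric] distrib_left[symmetric])
    ultimately show ?thesis by simp
  qed
  moreover have "half_line_density (pos_convolution f g)"
    using a b by (intro half_line_density_pos_convolution[of f g "a / 2" "b / 2"]) auto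
  moreover have "power_lower_bound_at_0 (pos_convolution f g) (a + b)"
    using a b by (intro power_lower_bound_pos_convolution[of f g "a / 2" "b / 2"]) auto
  ultimately show ?thesis using a(1) b(1) by (auto simp: shape_density_def)
qed

lemma (in prob_space) distributed_add_pos_convolution:
  assumes "indep_var borel X borel Y"
    and "distributed M lborel X (\<lambda>x. ennreal (f x))" "distributed M lborel Y (\<lambda>x. ennreal (g x))"
    and f: "shape_density f a" and g: "shape_density g b"
  shows "distributed M lborel (\<lambda>\<omega>. X \<omega> + Y \<omega>) (\<lambda>x. ennreal (pos_convolution f g x))"
proof -
  have "(\<integral>\<^sup>+y. ennreal (f (x - y)) * ennreal (g y) \<partial>lborel) = ennreal (pos_convolution f g x)" for x
    using f g by (intro nn_integral_convolution_eq[of f g "a / 2" "b / 2"]) (auto simp: shape_density_def)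
  then show ?thesis using distributed_convolution[OF assms(1-3)] by simp
qed

section \<open>Products: Mellin convolution\<close>

lemma (in prob_space) mult_indep_random_variable:
  fixes X Y :: "'a \<Rightarrow> real"
  assumes ind: "indep_var borel X borel Y"
  assumes [simp, measurable]: "random_variable borel X"
  assumes [simp, measurable]: "random_variable borel Y"
  shows "distr M borel (\<lambda>x. X x * Y x) = distr (distr M borel X \<Otimes>\<^sub>M distr M borel Y) borel (\<lambda>(x, y). x * y)"
  using ind unfolding indep_var_distribution_eq
  by (auto simp: distr_distr intro!:arg_cong[where f = "distr M borel"])

lemma distr_mult_density:
  fixes f g :: "real \<Rightarrow> ennreal"
  assumes [measurable]: "f \<in> borel_measurable borel" "g \<in> borel_measurable borel"
  assumes [simp]: "finite_measure (density lborel f)" "finite_measure (density lborel g)"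
  assumes f0: "\<And>t. t \<le> 0 \<Longrightarrow> f t = 0"
  shows "distr (density lborel f \<Otimes>\<^sub>M density lborel g) borel (\<lambda>(x, y). x * y)
     = density lborel (\<lambda>z. \<integral>\<^sup>+t. f t * g (z / t) * ennreal (1 / t) \<partial>lborel)"
    (is "?l = ?r")
proof (intro measure_eqI)
  fix A assume "A \<in> sets ?l"
  then have [measurable]: "A \<in> sets borel"
    by simp
  interpret Mf: finite_measure "density lborel f" by simp
  interpret Mg: finite_measure "density lborel g" by simp
  interpret pair_sigma_finite "density lborel f" "density lborel g" ..
  let ?P = "density lborel f \<Otimes>\<^sub>M density lborel g"
  have "emeasure ?l A = emeasure ?P ((\<lambda>p. fst p * snd p) -` A \<inter> space ?P)"
    by (subst emeasure_distr) (auto simp: split_beta')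
  also have "\<dots> = (\<integral>\<^sup>+p. indicator ((\<lambda>p. fst p * snd p) -` A \<inter> space ?P) p \<partial>?P)"
    by (rule nn_integral_indicator[symmetric]) measurable
  also have "\<dots> = (\<integral>\<^sup>+p. indicator A (fst p * snd p) \<partial>?P)"
    by (intro nn_integral_cong) (auto simp: space_pair_measure split: split_indicator)
  also have "\<dots> = (\<integral>\<^sup>+x. \<integral>\<^sup>+y. indicator A (x * y) \<partial>density lborel g \<partial>density lborel f)"
  proof -
    have meas: "(\<lambda>p. indicator A (fst p * snd p) :: ennreal) \<in> borel_measurable ?P" by measurable
    show ?thesis using Mg.nn_integral_fst[OF meas] by simp
  qed
  also have "\<dots> = (\<integral>\<^sup>+x. f x * (\<integral>\<^sup>+y. g y * indicator A (x * y) \<partial>lborel) \<partial>lborel)"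
    by (simp add: nn_integral_density)
  also have "\<dots> = (\<integral>\<^sup>+x. (\<integral>\<^sup>+z. f x * g (z / x) * ennreal (1 / x) * indicator A z \<partial>lborel) \<partial>lborel)"
  proof (intro nn_integral_cong)
    fix x :: real
    show "f x * (\<integral>\<^sup>+y. g y * indicator A (x * y) \<partial>lborel) =
      (\<integral>\<^sup>+z. f x * g (z / x) * ennreal (1 / x) * indicator A z \<partial>lborel)"
    proof (cases "x > 0")
      case False
      then show ?thesis using f0[of x] by simp
    next
      case True
      have "(\<integral>\<^sup>+y. g y * indicator A (x * y) \<partial>lborel) =
          ennreal \<bar>1 / x\<bar> * (\<integral>\<^sup>+z. g (0 + (1/x) * z) * indicator A (x * (0 + (1/x) * z)) \<partial>lborel)"
        using True by (intro nn_integral_real_affine) auto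
      also have "\<dots> = ennreal (1 / x) * (\<integral>\<^sup>+z. g (z / x) * indicator A z \<partial>lborel)"
        using True by simp
      also have "\<dots> = (\<integral>\<^sup>+z. ennreal (1 / x) * (g (z / x) * indicator A z) \<partial>lborel)"
        by (intro nn_integral_cmult[symmetric]) auto
      finally have "f x * (\<integral>\<^sup>+y. g y * indicator A (x * y) \<partial>lborel) =
          f x * (\<integral>\<^sup>+z. ennreal (1 / x) * (g (z / x) * indicator A z) \<partial>lborel)" by simp
      also have "\<dots> = (\<integral>\<^sup>+z. f x * (ennreal (1 / x) * (g (z / x) * indicator A z)) \<partial>lborel)"
        by (intro nn_integral_cmult[symmetric]) auto
      finally show ?thesis by (simp add: ac_simps)
    qed
  qed
  also have "\<dots> = (\<integral>\<^sup>+z. (\<integral>\<^sup>+x. f x * g (z / x) * ennreal (1 / x) * indicator A z \<partial>lborel) \<partial>lborel)"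
    by (intro lborel_pair.Fubini') simp
  also have "\<dots> = (\<integral>\<^sup>+z. (\<integral>\<^sup>+x. f x * g (z / x) * ennreal (1 / x) \<partial>lborel) * indicator A z \<partial>lborel)"
    by (intro nn_integral_cong nn_integral_multc) auto
  also have "\<dots> = emeasure ?r A"
    by (simp add: emeasure_density)
  finally show "emeasure ?l A = emeasure ?r A" .
qed simp

lemma (in prob_space) distributed_mult:
  fixes f g :: "real \<Rightarrow> ennreal" and X Y :: "'a \<Rightarrow> real"
  assumes indep: "indep_var borel X borel Y"
  assumes X: "distributed M lborel X f"
  assumes Y: "distributed M lborel Y g"
  assumes f0: "\<And>t. t \<le> 0 \<Longrightarrow> f t = 0"
  shows "distributed M lborel (\<lambda>x. X x * Y x) (\<lambda>z. \<integral>\<^sup>+t. f t * g (z / t) * ennreal (1 / t) \<partial>lborel)"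
  unfolding distributed_def
proof safe
  have fg[measurable]: "f \<in> borel_measurable borel" "g \<in> borel_measurable borel"
    using distributed_borel_measurable[OF X] distributed_borel_measurable[OF Y] by simp_all
  show "(\<lambda>z. \<integral>\<^sup>+t. f t * g (z / t) * ennreal (1 / t) \<partial>lborel) \<in> borel_measurable lborel"
    by measurable
  have "distr M borel (\<lambda>x. X x * Y x) = distr (distr M borel X \<Otimes>\<^sub>M distr M borel Y) borel (\<lambda>(x, y). x * y)"
    using distributed_measurable[OF X] distributed_measurable[OF Y]
    by (intro mult_indep_random_variable) (auto simp: indep)
  also have "\<dots> = distr (density lborel f \<Otimes>\<^sub>M density lborel g) borel (\<lambda>(x, y). x * y)"
    using distributed_distr_eq_density[OF X] distributed_distr_eq_density[OF Y]
    by (simp cong: distr_cong)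
  also have "\<dots> = density lborel (\<lambda>z. \<integral>\<^sup>+t. f t * g (z / t) * ennreal (1 / t) \<partial>lborel)"
  proof (rule distr_mult_density)
    show "finite_measure (density lborel f)"
      using X by (rule distributed_finite_measure_density)
    show "finite_measure (density lborel g)"
      using Y by (rule distributed_finite_measure_density)
  qed (use f0 in auto)
  finally show "distr M lborel (\<lambda>x. X x * Y x) = density lborel (\<lambda>z. \<integral>\<^sup>+t. f t * g (z / t) * ennreal (1 / t) \<partial>lborel)"
    by (simp cong: distr_cong)
  show "random_variable lborel (\<lambda>x. X x * Y x)"
    using distributed_measurable[OF X] distributed_measurable[OF Y] by simp
qed

lemma (in prob_space) integrable_density_of_distributed:
  assumes X: "distributed M lborel X (\<lambda>x. ennreal (f x))" and nonneg: "\<And>x. 0 \<le> f x"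
  shows "integrable lborel f"
proof -
  have "integrable lborel (\<lambda>x. f x * 1) \<longleftrightarrow> integrable M (\<lambda>x. 1::real)"
    by (rule distributed_integrable[OF X]) (auto simp: nonneg)
  then show ?thesis by simp
qed

text \<open>A bound \<open>f x \<le> C * x powr (v - 1)\<close> controls \<open>f t * t powr (- w)\<close> near \<open>0\<close> by a
  Beta kernel, and integrability of \<open>f\<close> controls it on \<open>[1, \<infinity>)\<close>.\<close>
lemma integrable_mult_powr_neg:
  assumes f: "half_line_density f" "integrable lborel f" "power_upper_bound f v"
    and w: "0 \<le> w" "w < v"
  shows "integrable lborel (\<lambda>t. f t * t powr (- w))"
proof -
  have [measurable]: "f \<in> borel_measurable borel" by (rule half_line_density_borel_measurable[OF f(1)])
  obtain C where C: "0 \<le> C" "\<And>x. 0 < x \<Longrightarrow> f x \<le> C * x powr (v - 1)"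
    using f(3) half_line_density_nonneg[OF f(1)] by (rule power_upper_boundE) blast
  show ?thesis
  proof (rule Bochner_Integration.integrable_bound)
    show "integrable lborel (\<lambda>t. C * beta_kernel (v - w) 1 t + f t)"
      using integrable_beta_kernel[of "v - w" 1] w f(2) by simp
    show "(\<lambda>t. f t * t powr (- w)) \<in> borel_measurable lborel" by measurable
    show "AE t in lborel. norm (f t * t powr (- w)) \<le> norm (C * beta_kernel (v - w) 1 t + f t)"
    proof (intro AE_I2)
      fix t :: real
      have B: "0 \<le> beta_kernel (v - w) 1 t" by (rule beta_kernel_nonneg)
      have ft: "0 \<le> f t" by (rule half_line_density_nonneg[OF f(1)])
      have "f t * t powr (- w) \<le> C * beta_kernel (v - w) 1 t + f t"
      proof (cases "t \<le> 0")
        case True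
        then show ?thesis using C(1) B by (simp add: half_line_density_nonpos[OF f(1)])
      next
        case pos: False
        show ?thesis
        proof (cases "t < 1")
          case True
          have "f t * t powr (- w) \<le> C * t powr (v - 1) * t powr (- w)"
            using C(2)[of t] pos by (intro mult_right_mono) auto
          also have "\<dots> = C * beta_kernel (v - w) 1 t"
            using True pos by (simp add: beta_kernel_def powr_add[symmetric] mult.assoc algebra_simps)
          finally show ?thesis using ft by linarith
        next
          case False
          then have "t powr (- w) \<le> 1" using w(1) by (simp add: powr_minus_divide ge_one_powr_ge_zero)
          then have "f t * t powr (- w) \<le> f t" using ft by (simp add: mult_left_le)
          then show ?thesis using C(1) B by (simp add: add_increasing)
        qed
      qed
      then show "norm (f t * t powr (- w)) \<le> norm (C * beta_kernel (v - w) 1 t + f t)"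
        using ft by simp
    qed
  qed
qed

definition mellin_convolution :: "(real \<Rightarrow> real) \<Rightarrow> (real \<Rightarrow> real) \<Rightarrow> real \<Rightarrow> real" where
  "mellin_convolution f g z = (\<integral>t. f t * g (z / t) / t \<partial>lborel)"

context
  fixes f g :: "real \<Rightarrow> real" and v w :: real
  assumes f: "half_line_density f" and f_integrable: "integrable lborel f"
    and g: "half_line_density g"
    and f_upper: "power_upper_bound f v" and g_upper: "power_upper_bound g w"
    and w: "0 \<le> w" "w < v"
begin

lemma mellin_kernel_nonneg: "0 \<le> f t * g (z / t) / t"
  using half_line_density_nonneg[OF f, of t] half_line_density_nonneg[OF g, of "z / t"]
    half_line_density_nonpos[OF f, of t]
  by (cases "0 < t") auto

lemma mellin_kernel_nonpos:
  assumes "z \<le> 0"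
  shows "f t * g (z / t) / t = 0"
proof (cases "0 < t")
  case True
  then show ?thesis
    using assms half_line_density_nonpos[OF g, of "z / t"] by (simp add: divide_nonpos_pos)
qed (simp add: half_line_density_nonpos[OF f])

lemma mellin_kernel_le:
  obtains C where "0 \<le> C"
    "\<And>z t. 0 < z \<Longrightarrow> f t * g (z / t) / t \<le> C * z powr (w - 1) * (f t * t powr (- w))"
proof -
  obtain C where C: "0 \<le> C" "\<And>x. 0 < x \<Longrightarrow> g x \<le> C * x powr (w - 1)"
    using g_upper half_line_density_nonneg[OF g] by (rule power_upper_boundE) blast
  have "f t * g (z / t) / t \<le> C * z powr (w - 1) * (f t * t powr (- w))" if z: "0 < z" for z t
  proof (cases "0 < t")
    case True
    have "f t * g (z / t) / t \<le> f t * (C * (z / t) powr (w - 1)) / t"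
      using C(2)[of "z / t"] z True half_line_density_nonneg[OF f]
      by (intro divide_right_mono mult_left_mono) auto
    also have "(z / t) powr (w - 1) = z powr (w - 1) * (t powr (- w) * t)"
    proof -
      have "t powr (w - 1) = t powr w / t" using True by (simp add: powr_diff)
      then have "t powr (- w) * t = 1 / t powr (w - 1)" using True by (simp add: powr_minus_divide)
      then show ?thesis using z True by (simp add: powr_divide)
    qed
    finally show ?thesis using True by (simp add: ac_simps)
  qed (simp add: half_line_density_nonpos[OF f])
  with C(1) show thesis by (rule that)
qed

lemma integrable_mellin_kernel: "integrable lborel (\<lambda>t. f t * g (z / t) / t)"
proof (cases "0 < z")
  case True
  obtain C where C: "0 \<le> C"
    "\<And>z t. 0 < z \<Longrightarrow> f t * g (z / t) / t \<le> C * z powr (w - 1) * (f t * t powr (- w))"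
    by (rule mellin_kernel_le) blast
  have [measurable]: "f \<in> borel_measurable borel" "g \<in> borel_measurable borel"
    using f g by (simp_all add: half_line_density_borel_measurable)
  show ?thesis
  proof (rule Bochner_Integration.integrable_bound)
    show "integrable lborel (\<lambda>t. C * z powr (w - 1) * (f t * t powr (- w)))"
      using integrable_mult_powr_neg[OF f f_integrable f_upper w] by simp
    show "AE t in lborel. norm (f t * g (z / t) / t) \<le> norm (C * z powr (w - 1) * (f t * t powr (- w)))"
    proof (intro AE_I2)
      fix t
      have "norm (f t * g (z / t) / t) = f t * g (z / t) / t"
        by (simp only: real_norm_def abs_of_nonneg[OF mellin_kernel_nonneg])
      also have "\<dots> \<le> C * z powr (w - 1) * (f t * t powr (- w))" by (rule C(2)[OF True])
      also have "\<dots> \<le> norm (C * z powr (w - 1) * (f t * t powr (- w)))"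
        by (simp only: real_norm_def abs_ge_self)
      finally show "norm (f t * g (z / t) / t) \<le> norm (C * z powr (w - 1) * (f t * t powr (- w)))" .
    qed
  qed simp
qed (simp add: mellin_kernel_nonpos)

lemma nn_integral_mellin_eq:
  "(\<integral>\<^sup>+t. ennreal (f t) * ennreal (g (z / t)) * ennreal (1 / t) \<partial>lborel)
    = ennreal (mellin_convolution f g z)"
proof -
  have "ennreal (f t) * ennreal (g (z / t)) * ennreal (1 / t) = ennreal (f t * g (z / t) / t)" for t
    using half_line_density_nonneg[OF f, of t] half_line_density_nonneg[OF g, of "z / t"]
      half_line_density_nonpos[OF f, of t]
    by (cases "0 < t") (auto simp: ennreal_mult divide_inverse)
  then show ?thesis
    unfolding mellin_convolution_def
    by (simp only:) (intro nn_integral_eq_integral integrable_mellin_kernel AE_I2 mellin_kernel_nonneg)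
qed

lemma continuous_on_mellin_convolution: "continuous_on {0<..} (mellin_convolution f g)"
proof -
  obtain C where C: "0 \<le> C"
    "\<And>z t. 0 < z \<Longrightarrow> f t * g (z / t) / t \<le> C * z powr (w - 1) * (f t * t powr (- w))"
    by (rule mellin_kernel_le) blast
  have [measurable]: "f \<in> borel_measurable borel" "g \<in> borel_measurable borel"
    using f g by (simp_all add: half_line_density_borel_measurable)
  have "isCont (mellin_convolution f g) z0" if z0: "0 < z0" for z0
  proof -
    define M where "M = max ((z0 / 2) powr (w - 1)) ((2 * z0) powr (w - 1))"
    show ?thesis unfolding mellin_convolution_def
    proof (rule isCont_integral_dominated[where U="{z0 / 2<..<2 * z0}"
          and w="\<lambda>t. C * M * (f t * t powr (- w))"])
      show "integrable lborel (\<lambda>t. C * M * (f t * t powr (- w)))"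
        using integrable_mult_powr_neg[OF f f_integrable f_upper w] by simp
      show "\<bar>f t * g (z / t) / t\<bar> \<le> C * M * (f t * t powr (- w))" if "z \<in> {z0 / 2<..<2 * z0}" for z t
      proof -
        have z: "0 < z" "z0 / 2 \<le> z" "z \<le> 2 * z0" using that z0 by auto
        have "z powr (w - 1) \<le> M" unfolding M_def using z z0 by (intro powr_between_le_max_powr) auto
        then have "C * z powr (w - 1) * (f t * t powr (- w)) \<le> C * M * (f t * t powr (- w))"
          using C(1) half_line_density_nonneg[OF f, of t] by (intro mult_right_mono mult_left_mono) auto
        then show ?thesis using C(2)[OF z(1), of t] mellin_kernel_nonneg[of t z] by simp
      qed
      show "isCont (\<lambda>z. f t * g (z / t) / t) z0" for t
      proof (cases "0 < t")
        case True
        then have "isCont g (z0 / t)" using z0 g by (intro half_line_density_isCont) auto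
        then show ?thesis using True
          by (intro continuous_intros isCont_o2[where f="\<lambda>z. z / t"]) auto
      qed (simp add: half_line_density_nonpos[OF f])
    qed (use z0 in auto)
  qed
  then show ?thesis using continuous_on_eq_continuous_at[OF open_greaterThan] by blast
qed

lemma half_line_density_mellin_convolution: "half_line_density (mellin_convolution f g)"
  using continuous_on_mellin_convolution mellin_kernel_nonneg
  by (auto simp: half_line_density_def mellin_convolution_def integral_nonneg mellin_kernel_nonpos)

lemma power_upper_bound_mellin_convolution: "power_upper_bound (mellin_convolution f g) w"
proof -
  obtain C where C: "0 \<le> C"
    "\<And>z t. 0 < z \<Longrightarrow> f t * g (z / t) / t \<le> C * z powr (w - 1) * (f t * t powr (- w))"
    by (rule mellin_kernel_le) blast
  define I where "I = (\<integral>t. f t * t powr (- w) \<partial>lborel)"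
  have "mellin_convolution f g z \<le> C * I * z powr (w - 1)" if z: "0 < z" for z
  proof -
    have "mellin_convolution f g z \<le> (\<integral>t. C * z powr (w - 1) * (f t * t powr (- w)) \<partial>lborel)"
      unfolding mellin_convolution_def
      using integrable_mellin_kernel integrable_mult_powr_neg[OF f f_integrable f_upper w] C(2)[OF z]
      by (intro integral_mono) auto
    also have "\<dots> = C * I * z powr (w - 1)" by (simp add: I_def)
    finally show ?thesis .
  qed
  then show ?thesis unfolding power_upper_bound_def by blast
qed

lemma mellin_convolution_ge_window:
  assumes "l \<le> u" "\<And>t. l \<le> t \<Longrightarrow> t \<le> u \<Longrightarrow> c \<le> f t * g (z / t) / t"
  shows "c * (u - l) \<le> mellin_convolution f g z"
proof -
  have window: "c * indicator {l..u} t \<le> f t * g (z / t) / t" for t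
    using assms(2)[of t] mellin_kernel_nonneg[of t z] by (cases "t \<in> {l..u}") auto
  show ?thesis
    using integral_mono[OF _ integrable_mellin_kernel window] assms(1)
    by (simp add: mellin_convolution_def)
qed

text \<open>Near \<open>0\<close> the kernel is of order \<open>z powr (p - 1) / z\<close> on the window
  \<open>t \<in> [2 z / \<delta>g, 4 z / \<delta>g]\<close>, where \<open>z / t\<close> stays in the fixed interval \<open>[\<delta>g / 4, \<delta>g / 2]\<close>.\<close>
lemma power_lower_bound_mellin_convolution_left:
  fixes p q :: real
  assumes "power_lower_bound_at_0 f p" "power_lower_bound_at_0 g q"
  shows "power_lower_bound_at_0 (mellin_convolution f g) p"
proof -
  obtain cf \<delta>f where df: "0 < cf" "0 < \<delta>f" "\<And>x. 0 < x \<Longrightarrow> x < \<delta>f \<Longrightarrow> cf * x powr (p - 1) \<le> f x"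
    using assms(1) by (rule power_lower_bound_at_0E) blast
  obtain cg \<delta>g where dg: "0 < cg" "0 < \<delta>g" "\<And>x. 0 < x \<Longrightarrow> x < \<delta>g \<Longrightarrow> cg * x powr (q - 1) \<le> g x"
    using assms(2) by (rule power_lower_bound_at_0E) blast
  define \<kappa>f where "\<kappa>f = min ((2 / \<delta>g) powr (p - 1)) ((4 / \<delta>g) powr (p - 1))"
  define \<kappa>g where "\<kappa>g = min ((\<delta>g / 4) powr (q - 1)) ((\<delta>g / 2) powr (q - 1))"
  have \<kappa>: "0 < \<kappa>f" "0 < \<kappa>g" using dg by (auto simp: \<kappa>f_def \<kappa>g_def)
  define c where "c = cf * cg * \<kappa>f * \<kappa>g"
  have "c / 2 * z powr (p - 1) \<le> mellin_convolution f g z"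
    if z: "0 < z" "z < \<delta>f * \<delta>g / 4" for z
  proof -
    have "c * z powr (p - 1) * (\<delta>g / (4 * z)) \<le> f t * g (z / t) / t"
      if t: "2 * z / \<delta>g \<le> t" "t \<le> 4 * z / \<delta>g" for t
    proof -
      have "0 < 2 * z / \<delta>g" using z dg(2) by simp
      then have t0: "0 < t" using t(1) by linarith
      have "4 * z / \<delta>g < \<delta>f" using z(2) dg(2) by (simp add: field_simps)
      then have "cf * t powr (p - 1) \<le> f t" using df(3) t0 t(2) by simp
      moreover have "z powr (p - 1) * \<kappa>f \<le> t powr (p - 1)"
        unfolding \<kappa>f_def using t z dg(2) by (intro powr_mult_min_le_powr_between) auto
      ultimately have F: "cf * (z powr (p - 1) * \<kappa>f) \<le> f t"
        using df(1) by (meson mult_left_mono less_imp_le order.trans)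
      have zt: "\<delta>g / 4 \<le> z / t" "z / t \<le> \<delta>g / 2"
        using t t0 z dg(2) by (auto simp: field_simps)
      moreover have "z / t < \<delta>g" using zt(2) dg(2) by linarith
      ultimately have "cg * (z / t) powr (q - 1) \<le> g (z / t)" using z t0 by (intro dg(3)) auto
      moreover have "\<kappa>g \<le> (z / t) powr (q - 1)"
        unfolding \<kappa>g_def using zt dg(2) by (intro min_powr_le_powr_between) auto
      ultimately have G: "cg * \<kappa>g \<le> g (z / t)"
        using dg(1) by (meson mult_left_mono less_imp_le order.trans)
      have T: "\<delta>g / (4 * z) \<le> 1 / t" using t t0 z dg(2) by (auto simp: field_simps)
      have "c * z powr (p - 1) * (\<delta>g / (4 * z)) = (cf * (z powr (p - 1) * \<kappa>f)) * (cg * \<kappa>g) * (\<delta>g / (4 * z))"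
        by (simp add: c_def ac_simps)
      also have "\<dots> \<le> f t * g (z / t) * (1 / t)"
        using F G T df(1) dg(1,2) \<kappa> z half_line_density_nonneg[OF f] half_line_density_nonneg[OF g]
        by (intro mult_mono) auto
      finally show ?thesis by simp
    qed
    then have "c * z powr (p - 1) * (\<delta>g / (4 * z)) * (4 * z / \<delta>g - 2 * z / \<delta>g) \<le> mellin_convolution f g z"
      using z dg(2) by (intro mellin_convolution_ge_window) (auto simp: divide_right_mono)
    moreover have "c * z powr (p - 1) * (\<delta>g / (4 * z)) * (4 * z / \<delta>g - 2 * z / \<delta>g) = c / 2 * z powr (p - 1)"
      using z dg(2) by (simp add: field_simps)
    ultimately show ?thesis by linarith
  qed
  moreover have "0 < c / 2" using df dg \<kappa> by (simp add: c_def)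
  ultimately show ?thesis using df(2) dg(2)
    by (intro power_lower_bound_at_0I[of "c / 2" "\<delta>f * \<delta>g / 4"]) auto
qed

text \<open>Symmetrically, on the window \<open>t \<in> [\<delta>f / 4, \<delta>f / 2]\<close> the kernel is of order
  \<open>z powr (q - 1)\<close>.\<close>
lemma power_lower_bound_mellin_convolution_right:
  fixes p q :: real
  assumes "power_lower_bound_at_0 f p" "power_lower_bound_at_0 g q"
  shows "power_lower_bound_at_0 (mellin_convolution f g) q"
proof -
  obtain cf \<delta>f where df: "0 < cf" "0 < \<delta>f" "\<And>x. 0 < x \<Longrightarrow> x < \<delta>f \<Longrightarrow> cf * x powr (p - 1) \<le> f x"
    using assms(1) by (rule power_lower_bound_at_0E) blast
  obtain cg \<delta>g where dg: "0 < cg" "0 < \<delta>g" "\<And>x. 0 < x \<Longrightarrow> x < \<delta>g \<Longrightarrow> cg * x powr (q - 1) \<le> g x"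
    using assms(2) by (rule power_lower_bound_at_0E) blast
  define \<kappa>f where "\<kappa>f = min ((\<delta>f / 4) powr (p - 1)) ((\<delta>f / 2) powr (p - 1))"
  define \<kappa>g where "\<kappa>g = min ((2 / \<delta>f) powr (q - 1)) ((4 / \<delta>f) powr (q - 1))"
  have \<kappa>: "0 < \<kappa>f" "0 < \<kappa>g" using df by (auto simp: \<kappa>f_def \<kappa>g_def)
  define c where "c = cf * cg * \<kappa>f * \<kappa>g"
  have "c / 2 * z powr (q - 1) \<le> mellin_convolution f g z"
    if z: "0 < z" "z < \<delta>f * \<delta>g / 4" for z
  proof -
    have "c * z powr (q - 1) * (2 / \<delta>f) \<le> f t * g (z / t) / t"
      if t: "\<delta>f / 4 \<le> t" "t \<le> \<delta>f / 2" for t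
    proof -
      have t0: "0 < t" using t df(2) by linarith
      have "t < \<delta>f" using t df(2) by linarith
      then have "cf * t powr (p - 1) \<le> f t" using df(3) t0 by blast
      moreover have "\<kappa>f \<le> t powr (p - 1)"
        unfolding \<kappa>f_def using t df(2) by (intro min_powr_le_powr_between) auto
      ultimately have F: "cf * \<kappa>f \<le> f t"
        using df(1) by (meson mult_left_mono less_imp_le order.trans)
      have zt: "2 / \<delta>f * z \<le> z / t" "z / t \<le> 4 / \<delta>f * z"
        using t t0 z df(2) by (auto simp: field_simps)
      have "4 / \<delta>f * z < \<delta>g"
        using z df(2) by (simp add: field_simps)
      then have "cg * (z / t) powr (q - 1) \<le> g (z / t)" using zt z t0 by (intro dg(3)) auto
      moreover have "z powr (q - 1) * \<kappa>g \<le> (z / t) powr (q - 1)"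
        unfolding \<kappa>g_def using zt z df(2) by (intro powr_mult_min_le_powr_between) auto
      ultimately have G: "cg * (z powr (q - 1) * \<kappa>g) \<le> g (z / t)"
        using dg(1) by (meson mult_left_mono less_imp_le order.trans)
      have T: "2 / \<delta>f \<le> 1 / t" using t t0 by (auto simp: field_simps)
      have "c * z powr (q - 1) * (2 / \<delta>f) = (cf * \<kappa>f) * (cg * (z powr (q - 1) * \<kappa>g)) * (2 / \<delta>f)"
        by (simp add: c_def ac_simps)
      also have "\<dots> \<le> f t * g (z / t) * (1 / t)"
        using F G T df(1,2) dg(1) \<kappa> z half_line_density_nonneg[OF f] half_line_density_nonneg[OF g]
        by (intro mult_mono) auto
      finally show ?thesis by simp
    qed
    then have "c * z powr (q - 1) * (2 / \<delta>f) * (\<delta>f / 2 - \<delta>f / 4) \<le> mellin_convolution f g z"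
      using df(2) by (intro mellin_convolution_ge_window) auto
    moreover have "c * z powr (q - 1) * (2 / \<delta>f) * (\<delta>f / 2 - \<delta>f / 4) = c / 2 * z powr (q - 1)"
      using df(2) by (simp add: field_simps)
    ultimately show ?thesis by linarith
  qed
  moreover have "0 < c / 2" using df dg \<kappa> by (simp add: c_def)
  ultimately show ?thesis using df(2) dg(2)
    by (intro power_lower_bound_at_0I[of "c / 2" "\<delta>f * \<delta>g / 4"]) auto
qed

end

lemma shape_density_mellin_convolution:
  assumes f: "shape_density f a" and f_integrable: "integrable lborel f" and g: "shape_density g b"
  shows "shape_density (mellin_convolution f g) (min a b)"
proof -
  have a: "0 < a" "half_line_density f" "\<And>w. 0 < w \<Longrightarrow> w < a \<Longrightarrow> power_upper_bound f w"
    "power_lower_bound_at_0 f a"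
    using f by (auto simp: shape_density_def)
  have b: "0 < b" "half_line_density g" "\<And>w. 0 < w \<Longrightarrow> w < b \<Longrightarrow> power_upper_bound g w"
    "power_lower_bound_at_0 g b"
    using g by (auto simp: shape_density_def)
  have upper: "power_upper_bound (mellin_convolution f g) w" if "0 < w" "w < min a b" for w
    using a b that f_integrable
    by (intro power_upper_bound_mellin_convolution[of f g "(w + a) / 2" w]) auto
  define w0 where "w0 = min a b / 2"
  have w0: "0 < w0" "w0 < min a b" using a(1) b(1) by (auto simp: w0_def)
  note ctxt = a(2) f_integrable b(2) a(3) b(3) w0
  have "half_line_density (mellin_convolution f g)"
    using ctxt by (intro half_line_density_mellin_convolution[of f g "(w0 + a) / 2" w0]) auto
  moreover have "power_lower_bound_at_0 (mellin_convolution f g) a"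
    using ctxt a(4) b(4) by (intro power_lower_bound_mellin_convolution_left[of f g "(w0 + a) / 2" w0 a b]) auto
  moreover have "power_lower_bound_at_0 (mellin_convolution f g) b"
    using ctxt a(4) b(4) by (intro power_lower_bound_mellin_convolution_right[of f g "(w0 + a) / 2" w0 a b]) auto
  ultimately show ?thesis
    using a(1) b(1) upper by (auto simp: shape_density_def min_def)
qed

lemma (in prob_space) distributed_mult_mellin_convolution:
  assumes "indep_var borel X borel Y"
    and X: "distributed M lborel X (\<lambda>x. ennreal (f x))" and "distributed M lborel Y (\<lambda>x. ennreal (g x))"
    and f: "shape_density f a" and g: "shape_density g b"
  shows "distributed M lborel (\<lambda>\<omega>. X \<omega> * Y \<omega>) (\<lambda>x. ennreal (mellin_convolution f g x))"
proof -
  define w0 where "w0 = min a b / 2"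
  have w0: "0 < w0" "w0 < (w0 + a) / 2" "(w0 + a) / 2 < a" "w0 < b"
    using f g by (auto simp: shape_density_def w0_def)
  have ctxt: "half_line_density f" "integrable lborel f" "half_line_density g"
    "power_upper_bound f ((w0 + a) / 2)" "power_upper_bound g w0" "0 \<le> w0" "w0 < (w0 + a) / 2"
    using f g w0 integrable_density_of_distributed[OF X]
    by (auto simp: shape_density_def half_line_density_def)
  have "(\<integral>\<^sup>+t. ennreal (f t) * ennreal (g (z / t)) * ennreal (1 / t) \<partial>lborel)
      = ennreal (mellin_convolution f g z)" for z
    using ctxt by (rule nn_integral_mellin_eq)
  moreover have "ennreal (f t) = 0" if "t \<le> 0" for t
    using half_line_density_nonpos[OF ctxt(1) that] by simp
  ultimately show ?thesis using distributed_mult[OF assms(1-3)] by simp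
qed

section \<open>Independent sums and products\<close>

lemma (in prob_space) shape_density_sum:
  assumes "finite I" "I \<noteq> {}" "indep_vars (\<lambda>_. borel) X I"
    and "\<And>i. i \<in> I \<Longrightarrow> distributed M lborel (X i) (\<lambda>x. ennreal (f i x))"
    and "\<And>i. i \<in> I \<Longrightarrow> shape_density (f i) (m i)"
  shows "\<exists>h. distributed M lborel (\<lambda>\<omega>. \<Sum>i\<in>I. X i \<omega>) (\<lambda>x. ennreal (h x))
    \<and> shape_density h (\<Sum>i\<in>I. m i)"
  using assms
proof (induction I rule: finite_ne_induct)
  case (singleton i)
  then show ?case by auto
next
  case (insert i I)
  obtain h where h: "distributed M lborel (\<lambda>\<omega>. \<Sum>i\<in>I. X i \<omega>) (\<lambda>x. ennreal (h x))"
    "shape_density h (\<Sum>i\<in>I. m i)"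
    using insert.IH insert.prems indep_vars_subset[OF insert.prems(1)] by blast
  have "indep_var borel (X i) borel (\<lambda>\<omega>. \<Sum>i\<in>I. X i \<omega>)"
    using insert by (intro indep_vars_sum) auto
  then have "distributed M lborel (\<lambda>\<omega>. X i \<omega> + (\<Sum>i\<in>I. X i \<omega>)) (\<lambda>x. ennreal (pos_convolution (f i) h x))"
    using insert.prems h by (intro distributed_add_pos_convolution[of _ _ "f i" h "m i" "\<Sum>i\<in>I. m i"]) auto
  moreover have "shape_density (pos_convolution (f i) h) (m i + (\<Sum>i\<in>I. m i))"
    using insert.prems h by (intro shape_density_pos_convolution) auto
  ultimately show ?case using insert.hyps by auto
qed

lemma (in prob_space) shape_density_prod:
  assumes "finite I" "I \<noteq> {}" "indep_vars (\<lambda>_. borel) X I"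
    and "\<And>i. i \<in> I \<Longrightarrow> distributed M lborel (X i) (\<lambda>x. ennreal (f i x))"
    and "\<And>i. i \<in> I \<Longrightarrow> shape_density (f i) (m i)"
  shows "\<exists>h. distributed M lborel (\<lambda>\<omega>. \<Prod>i\<in>I. X i \<omega>) (\<lambda>x. ennreal (h x))
    \<and> shape_density h (Min (m ` I))"
  using assms
proof (induction I rule: finite_ne_induct)
  case (singleton i)
  then show ?case by auto
next
  case (insert i I)
  obtain h where h: "distributed M lborel (\<lambda>\<omega>. \<Prod>i\<in>I. X i \<omega>) (\<lambda>x. ennreal (h x))"
    "shape_density h (Min (m ` I))"
    using insert.IH insert.prems indep_vars_subset[OF insert.prems(1)] by blast
  have "indep_var borel (X i) borel (\<lambda>\<omega>. \<Prod>i\<in>I. X i \<omega>)"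
    using insert by (intro indep_vars_prod) auto
  then have "distributed M lborel (\<lambda>\<omega>. X i \<omega> * (\<Prod>i\<in>I. X i \<omega>)) (\<lambda>x. ennreal (mellin_convolution (f i) h x))"
    using insert.prems h by (intro distributed_mult_mellin_convolution[of _ _ "f i" h "m i" "Min (m ` I)"]) auto
  moreover have "integrable lborel (f i)"
    using insert.prems by (intro integrable_density_of_distributed[of "X i"])
      (auto simp: shape_density_def half_line_density_def)
  then have "shape_density (mellin_convolution (f i) h) (min (m i) (Min (m ` I)))"
    using insert.prems h by (intro shape_density_mellin_convolution) auto
  ultimately show ?case using insert.hyps by auto
qed

theorem theorem2:
  fixes M :: "'a measure" and K :: nat and lam c :: "nat \<Rightarrow> real"
    and \<eta> :: "nat \<Rightarrow> 'a \<Rightarrow> real"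
  assumes "prob_space M"
    and "K \<ge> 1"
    and "\<And>i. i \<in> {1..K} \<Longrightarrow> lam i > 0"
    and "\<And>i. i \<in> {1..K} \<Longrightarrow> c i > 0"
    and "prob_space.indep_vars M (\<lambda>_. borel) \<eta> {1..K}"
    and "\<And>i. i \<in> {1..K} \<Longrightarrow>
           distributed M lborel (\<eta> i) (\<lambda>x. ennreal (gg_density (lam i) (c i) 1 x))"
  shows "((\<exists>p. cont_density M (\<lambda>\<omega>. \<Prod>i=1..K. \<eta> i \<omega>) p)
          \<and> (\<forall>p. cont_density M (\<lambda>\<omega>. \<Prod>i=1..K. \<eta> i \<omega>) p
                 \<longrightarrow> sparsity_shape p = Min (lam ` {1..K})))
       \<and> ((\<exists>p. cont_density M (\<lambda>\<omega>. \<Sum>i=1..K. \<eta> i \<omega>) p)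
          \<and> (\<forall>p. cont_density M (\<lambda>\<omega>. \<Sum>i=1..K. \<eta> i \<omega>) p
                 \<longrightarrow> sparsity_shape p = (\<Sum>i=1..K. lam i)))"
proof -
  interpret prob_space M by fact
  have I: "finite {1..K}" "{1..K} \<noteq> {}" using assms(2) by auto
  have gg: "shape_density (gg_density (lam i) (c i) 1) (lam i)" if "i \<in> {1..K}" for i
    using assms(3,4) that by (intro shape_density_gg_density)
  obtain hp where hp: "distributed M lborel (\<lambda>\<omega>. \<Prod>i=1..K. \<eta> i \<omega>) (\<lambda>x. ennreal (hp x))"
    "shape_density hp (Min (lam ` {1..K}))"
    using shape_density_prod[OF I assms(5,6) gg] by blast
  obtain hs where hs: "distributed M lborel (\<lambda>\<omega>. \<Sum>i=1..K. \<eta> i \<omega>) (\<lambda>x. ennreal (hs x))"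
    "shape_density hs (\<Sum>i=1..K. lam i)"
    using shape_density_sum[OF I assms(5,6) gg] by blast
  have "cont_density M (\<lambda>\<omega>. \<Prod>i=1..K. \<eta> i \<omega>) hp" "cont_density M (\<lambda>\<omega>. \<Sum>i=1..K. \<eta> i \<omega>) hs"
    using hp hs by (auto simp: cont_density_def shape_density_def half_line_density_def)
  then show ?thesis
    using sparsity_shape_of_shape_density[OF hp] sparsity_shape_of_shape_density[OF hs] by blast
qed

end
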